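(* Let $p$ be a prime, let $A\subset\mathbb F_p$ be nonempty and let $\lambda$ be a probability measure on $\mathbb F_p$. Then $$\sum_{b\in\mathbb F_p^*}\lambda(b)\|1_A*1_{bA}\|_2\ll\left(\|\lambda\|_2+|A|^{-1/2}+|A|^{1/2}p^{-1/2}\right)^{c_0}|A|^{3/2},$$ with an absolute implied constant.
   Context: $\mathbb F_p^*=\mathbb F_p\setminus\{0\}$; $bA=\{ba:a\in A\}$; $1_A$ is the indicator function of $A$. A probability measure is $\lambda:\mathbb F_p\to\mathbb R_{\ge0}$ with $\sum\lambda=1$. $\|f\|_2=(\sum_{x\in\mathbb F_p}|f(x)|^2)^{1/2}$ and $f*g(x)=\sum_{y\in\mathbb F_p}f(y)g(x-y)$. $c_0>0$ is a fixed absolute constant (whose existence is a theorem of Bourgain) such that for every prime $p$ and all $A\subset\mathbb F_p$, $B\subset\mathbb F_p^*$ with $|A|\ge|B|$, $\sum_{b\in B}E(A,bA)\ll\min(p/|A|,|B|)^{-c_0}|A|^3|B|$, where $E(A,A')$ is the number of solutions of $a_1+a_1'=a_2+a_2'$ with $a_i\in A$, $a_i'\in A'$. *)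

theory Defs
  imports "HOL-Computational_Algebra.Primes" Complex_Main
begin

text \<open>F_p is modelled as the residues {0..<p} :: int set, arithmetic mod p.\<close>

definition Fp :: "int \<Rightarrow> int set" where
  "Fp p = {0..<p}"

definition Fp_star :: "int \<Rightarrow> int set" where
  "Fp_star p = {1..<p}"

definition dilate :: "int \<Rightarrow> int \<Rightarrow> int set \<Rightarrow> int set" where
  "dilate p b A = (\<lambda>a. (b * a) mod p) ` A"

definition energy :: "int \<Rightarrow> int set \<Rightarrow> int set \<Rightarrow> nat" where
  "energy p A A' = card {(a1, a1', a2, a2'). a1 \<in> A \<and> a1' \<in> A' \<and> a2 \<in> A \<and> a2' \<in> A'
      \<and> (a1 + a1') mod p = (a2 + a2') mod p}"

definition conv_ind :: "int \<Rightarrow> int set \<Rightarrow> int set \<Rightarrow> int \<Rightarrow> real" where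
  "conv_ind p A B x = (\<Sum>y\<in>Fp p. (if y \<in> A then 1 else 0) * (if (x - y) mod p \<in> B then 1 else 0))"

definition l2norm :: "int \<Rightarrow> (int \<Rightarrow> real) \<Rightarrow> real" where
  "l2norm p f = sqrt (\<Sum>x\<in>Fp p. (f x)\<^sup>2)"

definition prob_measure_Fp :: "int \<Rightarrow> (int \<Rightarrow> real) \<Rightarrow> bool" where
  "prob_measure_Fp p mu \<longleftrightarrow> (\<forall>x\<in>Fp p. mu x \<ge> 0) \<and> (\<Sum>x\<in>Fp p. mu x) = 1"

definition bourgain_bound :: "real \<Rightarrow> real \<Rightarrow> bool" where
  "bourgain_bound c0 K \<longleftrightarrow>
     (\<forall>p A B. prime p \<longrightarrow> A \<subseteq> Fp p \<longrightarrow> B \<subseteq> Fp_star p \<longrightarrow> card B \<le> card A \<longrightarrow>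
        (\<Sum>b\<in>B. real (energy p A (dilate p b A)))
          \<le> K * (min (real_of_int p / real (card A)) (real (card B))) powr (- c0)
               * real (card A) ^ 3 * real (card B))"

end

theory Submission imports Defs "HOL-Analysis.Convex" begin

text \<open>
  Write E(b) for the energy E(A, bA); the squared L2 norm of the convolution of the indicators
  of A and bA is at most E(b). Bourgain's bound applied to a set of J dilations, with J at most
  min(|A|, p/|A|), shows that any J of the E(b) sum to at most J t for t = K J^(-c0) |A|^3,
  K being Bourgain's constant.
  Hence fewer than J of them exceed t: on a set of J dilations containing those, Cauchy--Schwarz
  bounds the weighted sum of sqrt E(b) by the L2 norm of lambda times sqrt (J t), and on the
  rest each sqrt E(b) is at most sqrt t. Choosing J of order D^(-2), where D is the bracket on
  the right-hand side, makes both parts of size D^c0 |A|^(3/2).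
\<close>

lemma conv_ind_eq_card:
  "conv_ind p A A' x = real (card {y\<in>Fp p. y \<in> A \<and> (x - y) mod p \<in> A'})"
proof -
  have "conv_ind p A A' x = (\<Sum>y\<in>Fp p. if y \<in> A \<and> (x - y) mod p \<in> A' then 1 else 0)"
    unfolding conv_ind_def by (rule sum.cong) auto
  also have "\<dots> = (\<Sum>y\<in>{y\<in>Fp p. y \<in> A \<and> (x - y) mod p \<in> A'}. 1)"
    by (subst sum.inter_filter) (simp_all add: Fp_def)
  finally show ?thesis by simp
qed

lemma l2norm_conv_ind_sq_le_energy:
  assumes "A \<subseteq> Fp p" "A' \<subseteq> Fp p"
  shows "(l2norm p (conv_ind p A A'))\<^sup>2 \<le> real (energy p A A')"
proof -
  define S where "S x = {y\<in>Fp p. y \<in> A \<and> (x - y) mod p \<in> A'}" for x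
  define E where "E = {(a1, a1', a2, a2'). a1 \<in> A \<and> a1' \<in> A' \<and> a2 \<in> A \<and> a2' \<in> A'
      \<and> (a1 + a1') mod p = (a2 + a2') mod p}"
  define f where "f = (\<lambda>(x::int, y1::int, y2::int). (y1, (x - y1) mod p, y2, (x - y2) mod p))"
  have fin_Fp: "finite (Fp p)" by (simp add: Fp_def)
  have mod_Fp: "x mod p = x" if "x \<in> Fp p" for x
    using that by (simp add: Fp_def)
  have "E \<subseteq> A \<times> A' \<times> A \<times> A'" unfolding E_def by auto
  then have fin_E: "finite E"
    using assms fin_Fp by (meson finite_SigmaI finite_subset)
  have "inj_on f (SIGMA x:Fp p. S x \<times> S x)"
  proof (rule inj_onI)
    fix u v
    assume u: "u \<in> (SIGMA x:Fp p. S x \<times> S x)" and v: "v \<in> (SIGMA x:Fp p. S x \<times> S x)"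
      and "f u = f v"
    obtain x y1 y2 x' z1 z2 where uv: "u = (x, y1, y2)" "v = (x', z1, z2)"
      by (cases u, cases v) auto
    have x: "x \<in> Fp p" "x' \<in> Fp p" using u v uv by auto
    have y: "y1 = z1" "y2 = z2" and "(x - y1) mod p = (x' - z1) mod p"
      using \<open>f u = f v\<close> by (auto simp: f_def uv)
    then have "x mod p = x' mod p"
      using mod_add_cong[of "x - y1" p "x' - y1" y1 y1] by simp
    then have "x = x'"
      using mod_Fp[OF x(1)] mod_Fp[OF x(2)] by simp
    with y show "u = v" by (simp add: uv)
  qed
  moreover have "f ` (SIGMA x:Fp p. S x \<times> S x) \<subseteq> E"
  proof
    fix w
    assume "w \<in> f ` (SIGMA x:Fp p. S x \<times> S x)"
    then obtain x y1 y2 where w: "w = f (x, y1, y2)" and "x \<in> Fp p" "y1 \<in> S x" "y2 \<in> S x"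
      by auto
    moreover have "(y + (x - y) mod p) mod p = x mod p" for y
      by (simp add: mod_add_right_eq)
    ultimately show "w \<in> E"
      by (simp add: f_def E_def S_def)
  qed
  ultimately have card_le: "card (SIGMA x:Fp p. S x \<times> S x) \<le> energy p A A'"
    unfolding energy_def E_def[symmetric] using card_inj_on_le fin_E by blast
  have "(l2norm p (conv_ind p A A'))\<^sup>2 = (\<Sum>x\<in>Fp p. (conv_ind p A A' x)\<^sup>2)"
    unfolding l2norm_def by (simp add: sum_nonneg)
  also have "\<dots> = (\<Sum>x\<in>Fp p. real (card (S x \<times> S x)))"
    by (simp add: conv_ind_eq_card S_def card_cartesian_product power2_eq_square)
  also have "\<dots> = real (card (SIGMA x:Fp p. S x \<times> S x))"
    using fin_Fp by (simp add: S_def)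
  finally show ?thesis using card_le by simp
qed

lemma dilate_subset_Fp: "p > 0 \<Longrightarrow> dilate p b A \<subseteq> Fp p"
  by (auto simp: dilate_def Fp_def)

lemma sum_mult_sqrt_le:
  fixes w e :: "'a \<Rightarrow> real"
  assumes "\<And>b. b \<in> B \<Longrightarrow> e b \<ge> 0"
  shows "(\<Sum>b\<in>B. w b * sqrt (e b)) \<le> sqrt (\<Sum>b\<in>B. (w b)\<^sup>2) * sqrt (\<Sum>b\<in>B. e b)"
proof -
  have "(\<Sum>b\<in>B. w b * sqrt (e b))\<^sup>2 \<le> (\<Sum>b\<in>B. (w b)\<^sup>2) * (\<Sum>b\<in>B. (sqrt (e b))\<^sup>2)"
    by (rule Cauchy_Schwarz_ineq_sum)
  also have "(\<Sum>b\<in>B. (sqrt (e b))\<^sup>2) = (\<Sum>b\<in>B. e b)"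
    using assms by (intro sum.cong) auto
  finally have "\<bar>\<Sum>b\<in>B. w b * sqrt (e b)\<bar> \<le> sqrt ((\<Sum>b\<in>B. (w b)\<^sup>2) * (\<Sum>b\<in>B. e b))"
    by (metis real_sqrt_abs real_sqrt_le_mono)
  then show ?thesis by (simp add: real_sqrt_mult)
qed

lemma exists_subset_between_card:
  assumes "finite S" "T \<subseteq> S" "card T \<le> n" "n \<le> card S"
  obtains B where "T \<subseteq> B" "B \<subseteq> S" "card B = n"
proof -
  have "n - card T \<le> card (S - T)"
    using assms by (simp add: card_Diff_subset finite_subset)
  then obtain R where R: "R \<subseteq> S - T" "card R = n - card T"
    by (meson obtain_subset_with_card_n)
  have "card (T \<union> R) = n"
    using R assms by (subst card_Un_disjoint) (auto intro: finite_subset)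
  with R assms show thesis by (intro that[of "T \<union> R"]) auto
qed

text \<open>If every J of the values e b sum to at most J t, fewer than J of them exceed t; a set of J
  indices containing those is handled by Cauchy--Schwarz, the rest termwise.\<close>
lemma weighted_sqrt_sum_le_of_subset_sums:
  fixes w e :: "'a \<Rightarrow> real"
  assumes fin: "finite S"
    and w: "\<And>b. b \<in> S \<Longrightarrow> w b \<ge> 0" "(\<Sum>b\<in>S. w b) \<le> 1"
    and e: "\<And>b. b \<in> S \<Longrightarrow> e b \<ge> 0"
    and J: "1 \<le> J" "J \<le> card S" and t: "t \<ge> 0"
    and subset_sums: "\<And>B. B \<subseteq> S \<Longrightarrow> card B = J \<Longrightarrow> (\<Sum>b\<in>B. e b) \<le> real J * t"
  shows "(\<Sum>b\<in>S. w b * sqrt (e b)) \<le> (sqrt (\<Sum>b\<in>S. (w b)\<^sup>2) * sqrt (real J) + 1) * sqrt t"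
proof -
  define T where "T = {b\<in>S. e b > t}"
  have "card T < J"
  proof (rule ccontr)
    assume "\<not> card T < J"
    then obtain B where B: "B \<subseteq> T" "card B = J"
      by (meson not_less obtain_subset_with_card_n)
    then have "B \<noteq> {}" "finite B"
      using J fin finite_subset[of B S] by (auto simp: T_def)
    then have "(\<Sum>b\<in>B. t) < (\<Sum>b\<in>B. e b)"
      using B by (intro sum_strict_mono) (auto simp: T_def)
    moreover have "(\<Sum>b\<in>B. e b) \<le> real J * t"
      using B by (intro subset_sums) (auto simp: T_def)
    ultimately show False using B by simp
  qed
  then obtain B where B: "T \<subseteq> B" "B \<subseteq> S" "card B = J"
    using exists_subset_between_card[OF fin, of T J] J by (auto simp: T_def)
  have "(\<Sum>b\<in>B. w b * sqrt (e b)) \<le> sqrt (\<Sum>b\<in>B. (w b)\<^sup>2) * sqrt (\<Sum>b\<in>B. e b)"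
    using B e by (intro sum_mult_sqrt_le) auto
  also have "\<dots> \<le> sqrt (\<Sum>b\<in>S. (w b)\<^sup>2) * sqrt (real J * t)"
    using B fin e by (intro mult_mono real_sqrt_le_mono sum_mono2 subset_sums) (auto intro: sum_nonneg)
  finally have top: "(\<Sum>b\<in>B. w b * sqrt (e b)) \<le> sqrt (\<Sum>b\<in>S. (w b)\<^sup>2) * sqrt (real J) * sqrt t"
    by (simp add: real_sqrt_mult mult.assoc)
  have "(\<Sum>b\<in>S - B. w b * sqrt (e b)) \<le> (\<Sum>b\<in>S - B. w b * sqrt t)"
    using B w by (intro sum_mono mult_left_mono) (auto simp: T_def)
  also have "\<dots> = (\<Sum>b\<in>S - B. w b) * sqrt t" by (simp add: sum_distrib_right)
  also have "\<dots> \<le> sqrt t"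
    using w t fin sum_mono2[of S "S - B" w]
    by (intro mult_left_le_one_le) (auto intro: sum_nonneg)
  finally have rest: "(\<Sum>b\<in>S - B. w b * sqrt (e b)) \<le> sqrt t" .
  have "(\<Sum>b\<in>S. w b * sqrt (e b)) = (\<Sum>b\<in>B. w b * sqrt (e b)) + (\<Sum>b\<in>S - B. w b * sqrt (e b))"
    using sum.subset_diff[OF B(2) fin] by (simp add: add.commute)
  with top rest show ?thesis by (simp add: distrib_right)
qed

lemma bourgain_bound_mono:
  assumes "bourgain_bound c0 K" "K \<le> K'"
  shows "bourgain_bound c0 K'"
  unfolding bourgain_bound_def
proof (intro allI impI)
  fix p A B
  assume "prime p" "A \<subseteq> Fp p" "B \<subseteq> Fp_star p" "card B \<le> card A"
  define M where "M = min (real_of_int p / real (card A)) (real (card B))"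
  have "(\<Sum>b\<in>B. real (energy p A (dilate p b A))) \<le> K * M powr (- c0) * real (card A) ^ 3 * real (card B)"
    using assms(1) \<open>prime p\<close> \<open>A \<subseteq> Fp p\<close> \<open>B \<subseteq> Fp_star p\<close> \<open>card B \<le> card A\<close>
    unfolding bourgain_bound_def M_def by blast
  also have "\<dots> \<le> K' * M powr (- c0) * real (card A) ^ 3 * real (card B)"
    using assms(2) by (intro mult_right_mono) auto
  finally show "(\<Sum>b\<in>B. real (energy p A (dilate p b A)))
      \<le> K' * min (real_of_int p / real (card A)) (real (card B)) powr (- c0) * real (card A) ^ 3 * real (card B)"
    unfolding M_def .
qed

lemma l2norm_le_one_if_prob_measure:
  assumes "prob_measure_Fp p mu"
  shows "l2norm p mu \<le> 1"
proof -
  have mu: "\<And>x. x \<in> Fp p \<Longrightarrow> 0 \<le> mu x" "(\<Sum>x\<in>Fp p. mu x) = 1"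
    using assms by (auto simp: prob_measure_Fp_def)
  have "mu x \<le> 1" if "x \<in> Fp p" for x
    using mu that member_le_sum[of x "Fp p" mu] by (simp add: Fp_def)
  then have "(\<Sum>x\<in>Fp p. (mu x)\<^sup>2) \<le> (\<Sum>x\<in>Fp p. mu x)"
    using mu(1) by (intro sum_mono) (simp add: power2_eq_square mult_left_le_one_le)
  then show ?thesis using mu(2) by (simp add: l2norm_def)
qed

lemma scale_le_card_Fp_star:
  assumes "prime p" "n > 0" "real J \<le> n" "real J \<le> real_of_int p / n"
  shows "J \<le> card (Fp_star p)"
proof -
  have p2: "p \<ge> 2" using assms(1) by (simp add: prime_ge_2_int)
  have "real J * real J \<le> n * (real_of_int p / n)"
    using assms by (intro mult_mono) auto
  then have "real J * real J \<le> real_of_int p"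
    using assms(2) by simp
  moreover have "2 * real_of_int p \<le> real_of_int p * real_of_int p"
    using p2 by (intro mult_right_mono) auto
  ultimately have "real J < real_of_int p"
    using p2 mult_mono[of "real_of_int p" "real J" "real_of_int p" "real J"] by fastforce
  then show ?thesis
    by (simp add: Fp_star_def)
qed

lemma l2norm_conv_dilate_le_sqrt_energy:
  assumes "p > 0" "A \<subseteq> Fp p"
  shows "l2norm p (conv_ind p A (dilate p b A)) \<le> sqrt (real (energy p A (dilate p b A)))"
proof -
  have "(l2norm p (conv_ind p A (dilate p b A)))\<^sup>2 \<le> real (energy p A (dilate p b A))"
    using assms by (intro l2norm_conv_ind_sq_le_energy dilate_subset_Fp)
  then show ?thesis
    by (simp add: l2norm_def real_le_rsqrt sum_nonneg)
qed

lemma sum_weighted_conv_norm_le: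
  assumes bourgain: "bourgain_bound c0 K" and K: "K \<ge> 0"
    and p: "prime p" and A: "A \<subseteq> Fp p" and mu: "prob_measure_Fp p mu"
    and J: "1 \<le> J" "J \<le> card A" "real J \<le> real_of_int p / real (card A)"
  shows "(\<Sum>b\<in>Fp_star p. mu b * l2norm p (conv_ind p A (dilate p b A)))
    \<le> (l2norm p mu * sqrt (real J) + 1) * sqrt (K * real J powr (- c0) * real (card A) ^ 3)"
proof -
  define n where "n = real (card A)"
  define E where "E b = real (energy p A (dilate p b A))" for b
  define t where "t = K * real J powr (- c0) * n ^ 3"
  have t: "t \<ge> 0" using K by (simp add: t_def n_def)
  have p2: "p \<ge> 2" using p by (simp add: prime_ge_2_int)
  have fin_Fp: "finite (Fp p)" by (simp add: Fp_def)
  have star_Fp: "Fp_star p \<subseteq> Fp p" by (auto simp: Fp_star_def Fp_def)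
  have mu0: "\<And>x. x \<in> Fp p \<Longrightarrow> mu x \<ge> 0" and mu1: "(\<Sum>x\<in>Fp p. mu x) = 1"
    using mu by (auto simp: prob_measure_Fp_def)
  have J_star: "J \<le> card (Fp_star p)"
    using scale_le_card_Fp_star[OF p, of n J] J by (auto simp: n_def)
  have norm_le: "l2norm p (conv_ind p A (dilate p b A)) \<le> sqrt (E b)" for b
    unfolding E_def using p2 A by (intro l2norm_conv_dilate_le_sqrt_energy) auto
  have subset_sums: "(\<Sum>b\<in>B. E b) \<le> real J * t" if "B \<subseteq> Fp_star p" "card B = J" for B
  proof -
    have "min (real_of_int p / n) (real J) = real J"
      using J by (simp add: n_def)
    moreover have "(\<Sum>b\<in>B. E b)
        \<le> K * (min (real_of_int p / n) (real J)) powr (- c0) * n ^ 3 * real J"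
      using bourgain p A that J unfolding bourgain_bound_def E_def n_def by blast
    ultimately show ?thesis
      by (simp add: t_def mult_ac)
  qed
  have "(\<Sum>b\<in>Fp_star p. mu b * l2norm p (conv_ind p A (dilate p b A)))
      \<le> (\<Sum>b\<in>Fp_star p. mu b * sqrt (E b))"
    using star_Fp mu0 by (intro sum_mono mult_left_mono norm_le) auto
  also have "\<dots> \<le> (sqrt (\<Sum>b\<in>Fp_star p. (mu b)\<^sup>2) * sqrt (real J) + 1) * sqrt t"
  proof (rule weighted_sqrt_sum_le_of_subset_sums)
    show "(\<Sum>b\<in>Fp_star p. mu b) \<le> 1"
      using sum_mono2[OF fin_Fp star_Fp, of mu] mu0 mu1 by auto
  qed (use star_Fp mu0 J J_star t subset_sums in \<open>auto simp: E_def Fp_star_def\<close>)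
  also have "\<dots> \<le> (l2norm p mu * sqrt (real J) + 1) * sqrt t"
    unfolding l2norm_def
    by (intro mult_right_mono add_right_mono real_sqrt_le_mono sum_mono2 fin_Fp star_Fp)
      (auto simp: t)
  finally show ?thesis by (simp add: t_def n_def)
qed

text \<open>J is taken of order D^(-2) but at least 1; the last two summands of D are exactly what
  makes such a J fit below n and q/n.\<close>
lemma exists_scale:
  fixes L n q c :: real
  assumes L: "0 \<le> L" "L \<le> 1" and n: "1 \<le> n" "n \<le> q" and c: "0 \<le> c"
  defines "D \<equiv> L + n powr (-1/2) + n powr (1/2) * q powr (-1/2)"
  obtains J :: nat where "1 \<le> J" "real J \<le> n" "real J \<le> q / n" "L * sqrt (real J) \<le> 1"
    "real J powr (- c / 2) \<le> 2 powr (c / 2) * D powr c"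
proof -
  have inv_sqrt_n: "n powr (-1/2) = 1 / sqrt n"
    using n by (simp add: powr_minus powr_half_sqrt inverse_eq_divide)
  have sqrt_nq: "n powr (1/2) * q powr (-1/2) = sqrt (n / q)"
    using n by (simp add: powr_minus powr_half_sqrt real_sqrt_divide divide_simps inverse_eq_divide)
  have D_ge: "L \<le> D" "1 / sqrt n \<le> D" "sqrt (n / q) \<le> D"
    using L n unfolding D_def inv_sqrt_n sqrt_nq by auto
  have "1 / sqrt n > 0" using n by simp
  then have D_pos: "D > 0" using D_ge(2) by linarith
  define x where "x = 1 / D\<^sup>2"
  have x_pos: "x > 0" using D_pos by (simp add: x_def)
  have "1 / n \<le> D\<^sup>2"
    using power_mono[OF D_ge(2), of 2] n by (simp add: power_divide)
  then have x_n: "x \<le> n"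
    using n D_pos by (simp add: x_def field_simps)
  have "n / q \<le> D\<^sup>2"
    using power_mono[OF D_ge(3), of 2] n by simp
  then have x_qn: "x \<le> q / n"
    using n D_pos by (simp add: x_def field_simps)
  have one_qn: "1 \<le> q / n" using n by simp
  define J where "J = nat \<lceil>x / 2\<rceil>"
  have J_real: "real J = of_int \<lceil>x / 2\<rceil>"
    using x_pos by (simp add: J_def)
  have J_ge: "x / 2 \<le> real J" and J_less: "real J < x / 2 + 1"
    unfolding J_real by linarith+
  have J_le: "real J \<le> 1 \<or> real J \<le> x"
  proof (cases "x \<ge> 2")
    case False
    then have "J < 2" using J_less by simp
    then show ?thesis by simp
  qed (use J_less in linarith)
  show thesis
  proof
    show "1 \<le> J" using J_ge x_pos by (simp add: Suc_le_eq)
    show "real J \<le> n" "real J \<le> q / n"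
      using J_le x_n x_qn one_qn n by (meson order.trans)+
    show "L * sqrt (real J) \<le> 1"
      using J_le
    proof
      assume "real J \<le> 1"
      then show ?thesis using L mult_mono[of L 1 "sqrt (real J)" 1] by simp
    next
      assume "real J \<le> x"
      moreover have "sqrt x = 1 / D"
        using D_pos by (simp add: x_def real_sqrt_divide)
      ultimately have "sqrt (real J) \<le> 1 / D"
        using real_sqrt_le_mono by metis
      then have "L * sqrt (real J) \<le> D * (1 / D)"
        using L D_ge(1) D_pos by (intro mult_mono) auto
      then show ?thesis using D_pos by simp
    qed
    have "real J powr (- c / 2) \<le> (x / 2) powr (- c / 2)"
      using J_ge x_pos c by (intro powr_mono2') auto
    also have "(x / 2) powr (- c / 2) = x powr (- c / 2) * 2 powr (c / 2)"
      using x_pos by (simp add: powr_divide powr_minus divide_simps)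
    also have "x = D powr (-2)"
      using D_pos by (simp add: x_def powr_minus powr_realpow inverse_eq_divide)
    finally show "real J powr (- c / 2) \<le> 2 powr (c / 2) * D powr c"
      using D_pos by (simp add: powr_powr mult.commute)
  qed
qed

lemma real_sqrt_mult_powr_cube:
  fixes K j n c :: real
  assumes "K \<ge> 0" "j \<ge> 0" "n \<ge> 0"
  shows "sqrt (K * j powr (- c) * n ^ 3) = sqrt K * j powr (- c / 2) * n powr (3 / 2)"
proof -
  have "sqrt (n ^ 3) = n powr (3 / 2)"
  proof (cases "n = 0")
    case False
    then have "n ^ 3 = n powr 3"
      using assms(3) powr_realpow[of n 3] by simp
    then show ?thesis
      using assms(3) powr_half_sqrt_powr[of n 3] by simp
  qed simp
  moreover have "sqrt (j powr (- c)) = j powr (- c / 2)"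
    using assms(2) powr_half_sqrt_powr[of j "- c"] by simp
  ultimately show ?thesis
    by (simp add: real_sqrt_mult)
qed

theorem corollary2:
  fixes c0 :: real
  assumes "c0 > 0"
    and "\<exists>K. bourgain_bound c0 K"
  shows "\<exists>C. \<forall>(p::int) A mu. prime p \<longrightarrow> A \<subseteq> Fp p \<longrightarrow> A \<noteq> {} \<longrightarrow> prob_measure_Fp p mu \<longrightarrow>
      (\<Sum>b\<in>Fp_star p. mu b * l2norm p (conv_ind p A (dilate p b A)))
        \<le> C * (l2norm p mu + real (card A) powr (-1/2) + real (card A) powr (1/2) * real_of_int p powr (-1/2)) powr c0
             * real (card A) powr (3/2)"
proof -
  obtain K where bourgain: "bourgain_bound c0 K" and K: "K \<ge> 0"
    using assms(2) bourgain_bound_mono max.cobounded1 max.cobounded2 by blast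
  show ?thesis
  proof (intro exI allI impI)
    fix p :: int and A mu
    assume p: "prime p" and A: "A \<subseteq> Fp p" "A \<noteq> {}" and mu: "prob_measure_Fp p mu"
    define n where "n = real (card A)"
    define L where "L = l2norm p mu"
    define D where "D = L + n powr (-1/2) + n powr (1/2) * real_of_int p powr (-1/2)"
    have "finite A" using A(1) finite_subset by (auto simp: Fp_def)
    then have n: "1 \<le> n" "n \<le> real_of_int p"
      using A card_mono[OF _ A(1)] by (auto simp: n_def Fp_def Suc_le_eq card_gt_0_iff)
    have L: "0 \<le> L" "L \<le> 1"
      using l2norm_le_one_if_prob_measure[OF mu] by (auto simp: L_def l2norm_def sum_nonneg)
    obtain J where J: "1 \<le> J" "real J \<le> n" "real J \<le> real_of_int p / n" "L * sqrt (real J) \<le> 1"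
      and J_pow: "real J powr (- c0 / 2) \<le> 2 powr (c0 / 2) * D powr c0"
      using exists_scale[OF L n less_imp_le[OF assms(1)]] unfolding D_def by blast
    have "(\<Sum>b\<in>Fp_star p. mu b * l2norm p (conv_ind p A (dilate p b A)))
        \<le> (L * sqrt (real J) + 1) * (sqrt K * real J powr (- c0 / 2) * n powr (3 / 2))"
      using sum_weighted_conv_norm_le[OF bourgain K p A(1) mu, of J] J
        real_sqrt_mult_powr_cube[OF K, of "real J" n c0]
      by (simp add: L_def n_def)
    also have "\<dots> \<le> 2 * (sqrt K * (2 powr (c0 / 2) * D powr c0) * n powr (3 / 2))"
      using J J_pow K by (intro mult_mono) auto
    finally show "(\<Sum>b\<in>Fp_star p. mu b * l2norm p (conv_ind p A (dilate p b A)))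
        \<le> (2 * sqrt K * 2 powr (c0 / 2)) * (l2norm p mu + real (card A) powr (-1/2)
          + real (card A) powr (1/2) * real_of_int p powr (-1/2)) powr c0 * real (card A) powr (3/2)"
      by (simp add: D_def L_def n_def mult_ac)
  qed
qed

end
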